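(* Let $b\in(1,n)$ be an integer dividing $n$. For any $\mathbf{M}\in\mathcal{M}\mathcal{M}^{*(b,n)}$ there exist $\mathbf{L}_1,\mathbf{L}_2\in\mathcal{B}\mathcal{D}^{(n/b,n)}$ and $\mathbf{R}\in\mathcal{B}\mathcal{D}^{(b,n)}$ such that $\mathbf{M}=(\mathbf{P}_{(b,n)}^\top\mathbf{L}_1\mathbf{P}_{(b,n)})\mathbf{R}(\mathbf{P}_{(b,n)}^\top\mathbf{L}_2\mathbf{P}_{(b,n)})$.
   Context: Indices are 0-based; matrices over $\mathbb{F}\in\{\mathbb{R},\mathbb{C}\}$, $^*$ is conjugate transpose. For $c$ dividing $n$, $\mathcal{B}\mathcal{D}^{(c,n)}$ is the class of $n\times n$ block-diagonal matrices $\mathrm{diag}(\mathbf{R}_0,\dots,\mathbf{R}_{n/c-1})$ with arbitrary $c\times c$ blocks; $\mathcal{D}\mathcal{B}^{(c,n)}$ is the class of $n\times n$ matrices which, partitioned into an $(n/c)\times(n/c)$ grid of $c\times c$ blocks, have every block diagonal. $\mathcal{M}^{(b,n)}$ is the class of products $\mathbf{L}\mathbf{R}$ with $\mathbf{L}\in\mathcal{D}\mathcal{B}^{(b,n)}$, $\mathbf{R}\in\mathcal{B}\mathcal{D}^{(b,n)}$, and $\mathcal{M}\mathcal{M}^{*(b,n)}$ is the class of products $\mathbf{M}_1\mathbf{M}_2^*$ with $\mathbf{M}_1,\mathbf{M}_2\in\mathcal{M}^{(b,n)}$. For $0\le i<n$ write $i=i_1b+i_0$ with $0\le i_0<b$ and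 set $\sigma_{(b,n)}(i)=i_0\frac{n}{b}+i_1$; $\mathbf{P}_{(b,n)}$ is the permutation matrix of $\sigma_{(b,n)}$, so that $(\mathbf{P}_{(b,n)}\mathbf{X}\mathbf{P}_{(b,n)}^\top)[\sigma_{(b,n)}(i),\sigma_{(b,n)}(j)]=\mathbf{X}[i,j]$. *)

theory Defs
  imports "HOL-Analysis.Analysis"
begin

text \<open>Matrices of size n x n are represented as functions nat => nat => 'a, with
  entries outside {0..<n} x {0..<n} required to be zero (see is_mat).\<close>

type_synonym 'a mat = "nat \<Rightarrow> nat \<Rightarrow> 'a"

definition is_mat :: "nat \<Rightarrow> 'a::zero mat \<Rightarrow> bool" where
  "is_mat n A \<longleftrightarrow> (\<forall>i j. (i \<ge> n \<or> j \<ge> n) \<longrightarrow> A i j = 0)"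

definition mmul :: "nat \<Rightarrow> 'a::comm_semiring_1 mat \<Rightarrow> 'a mat \<Rightarrow> 'a mat" where
  "mmul n A B = (\<lambda>i j. if i < n \<and> j < n then (\<Sum>k<n. A i k * B k j) else 0)"

text \<open>Conjugate transpose with respect to a conjugation cj (cj = id for real,
  cj = cnj for complex).\<close>
definition ctrans :: "('a \<Rightarrow> 'a) \<Rightarrow> 'a mat \<Rightarrow> 'a mat" where
  "ctrans cj A = (\<lambda>i j. cj (A j i))"

definition transp_mat :: "'a mat \<Rightarrow> 'a mat" where
  "transp_mat A = (\<lambda>i j. A j i)"

definition BD :: "nat \<Rightarrow> nat \<Rightarrow> 'a::zero mat \<Rightarrow> bool" where
  "BD c n A \<longleftrightarrow> is_mat n A \<and> (\<forall>i<n. \<forall>j<n. i div c \<noteq> j div c \<longrightarrow> A i j = 0)"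

text \<open>DB^(c,n): every c x c block is diagonal.\<close>
definition DB :: "nat \<Rightarrow> nat \<Rightarrow> 'a::zero mat \<Rightarrow> bool" where
  "DB c n A \<longleftrightarrow> is_mat n A \<and> (\<forall>i<n. \<forall>j<n. i mod c \<noteq> j mod c \<longrightarrow> A i j = 0)"

definition Monarch :: "nat \<Rightarrow> nat \<Rightarrow> 'a::comm_semiring_1 mat \<Rightarrow> bool" where
  "Monarch b n M \<longleftrightarrow> (\<exists>L R. DB b n L \<and> BD b n R \<and> M = mmul n L R)"

definition MMstar :: "('a \<Rightarrow> 'a) \<Rightarrow> nat \<Rightarrow> nat \<Rightarrow> 'a::comm_semiring_1 mat \<Rightarrow> bool" where
  "MMstar cj b n M \<longleftrightarrow>
     (\<exists>M1 M2. Monarch b n M1 \<and> Monarch b n M2 \<and> M = mmul n M1 (ctrans cj M2))"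

definition sigma_perm :: "nat \<Rightarrow> nat \<Rightarrow> nat \<Rightarrow> nat" where
  "sigma_perm b n i = (i mod b) * (n div b) + i div b"

text \<open>Permutation matrix P_(b,n): P[sigma i, i] = 1, so that
  (P X P^T)[sigma i, sigma j] = X[i,j].\<close>
definition Pmat :: "nat \<Rightarrow> nat \<Rightarrow> 'a::zero_neq_one mat" where
  "Pmat b n = (\<lambda>r i. if i < n \<and> r = sigma_perm b n i then 1 else 0)"

end

theory Submission
  imports Defs
begin

text \<open>Write \<open>M = M1 M2^* = L R R'^* L'^*\<close> with \<open>L, L'\<close> in \<open>DB^(b,n)\<close> and
  \<open>R, R'\<close> in \<open>BD^(b,n)\<close>. The middle factor \<open>R R'^*\<close> is block diagonal and \<open>L'^*\<close>
  again has diagonal blocks, so it suffices that every matrix in \<open>DB^(b,n)\<close> is of the form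
  \<open>P^T L P\<close> with \<open>L\<close> in \<open>BD^(n/b,n)\<close> and \<open>P = P_(b,n)\<close>. Conjugation by \<open>P\<close> relabels
  index \<open>i\<close> as \<open>\<sigma>(i)\<close>, and \<open>\<sigma>(i) div (n/b) = i mod b\<close>: indices that agree modulo \<open>b\<close>
  land in the same diagonal block of size \<open>n/b\<close>.\<close>

lemma mmul_assoc:
  fixes A B C :: "'a::comm_semiring_1 mat"
  shows "mmul n (mmul n A B) C = mmul n A (mmul n B C)"
proof -
  have "(\<Sum>k<n. (\<Sum>l<n. A i l * B l k) * C k j) = (\<Sum>l<n. A i l * (\<Sum>k<n. B l k * C k j))"
    for i j
  proof -
    have "(\<Sum>k<n. (\<Sum>l<n. A i l * B l k) * C k j) = (\<Sum>k<n. \<Sum>l<n. A i l * B l k * C k j)"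
      by (simp add: sum_distrib_right)
    also have "\<dots> = (\<Sum>l<n. \<Sum>k<n. A i l * B l k * C k j)"
      by (rule sum.swap)
    also have "\<dots> = (\<Sum>l<n. A i l * (\<Sum>k<n. B l k * C k j))"
      by (simp add: sum_distrib_left mult.assoc)
    finally show ?thesis .
  qed
  then show ?thesis
    unfolding mmul_def by (auto intro!: ext sum.cong)
qed

lemma ctrans_mmul:
  fixes A B :: "'a::comm_semiring_1 mat"
  assumes zero: "cj 0 = 0" and add: "\<And>x y. cj (x + y) = cj x + cj y"
    and mult: "\<And>x y. cj (x * y) = cj x * cj y"
  shows "ctrans cj (mmul n A B) = mmul n (ctrans cj B) (ctrans cj A)"
proof -
  have "cj (\<Sum>k<n. A j k * B k i) = (\<Sum>k<n. cj (B k i) * cj (A j k))" for i j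
    using sum_comp_morphism[of cj "\<lambda>k. A j k * B k i" "{..<n}", OF zero add]
    by (simp add: mult mult.commute)
  then show ?thesis
    unfolding ctrans_def mmul_def by (auto intro!: ext simp: zero)
qed

lemma BD_mmul:
  fixes A B :: "'a::comm_semiring_1 mat"
  assumes "BD c n A" and "BD c n B"
  shows "BD c n (mmul n A B)"
  unfolding BD_def is_mat_def
proof (intro conjI allI impI)
  fix i j
  assume "i < n" "j < n" "i div c \<noteq> j div c"
  then have "A i k * B k j = 0" if "k < n" for k
    using assms that unfolding BD_def by (cases "i div c = k div c") auto
  then show "mmul n A B i j = 0"
    unfolding mmul_def by simp
qed (auto simp: mmul_def)

lemma BD_ctrans:
  assumes "cj 0 = 0" and "BD c n A"
  shows "BD c n (ctrans cj A)"
  using assms unfolding BD_def is_mat_def ctrans_def by auto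

lemma DB_ctrans:
  assumes "cj 0 = 0" and "DB c n A"
  shows "DB c n (ctrans cj A)"
  using assms unfolding DB_def is_mat_def ctrans_def by auto

lemma MMstar_DB_BD_DB:
  fixes M :: "'a::comm_semiring_1 mat"
  assumes zero: "cj 0 = 0" and add: "\<And>x y. cj (x + y) = cj x + cj y"
    and mult: "\<And>x y. cj (x * y) = cj x * cj y"
    and "MMstar cj b n M"
  obtains L R L' where "DB b n L" "BD b n R" "DB b n L'" "M = mmul n L (mmul n R L')"
proof -
  obtain L1 R1 L2 R2 where L1: "DB b n L1" and R1: "BD b n R1"
    and L2: "DB b n L2" and R2: "BD b n R2"
    and M: "M = mmul n (mmul n L1 R1) (ctrans cj (mmul n L2 R2))"
    using assms(4) unfolding MMstar_def Monarch_def by blast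
  show ?thesis
  proof (rule that)
    show "DB b n L1"
      by (fact L1)
    show "BD b n (mmul n R1 (ctrans cj R2))"
      using R1 R2 zero by (simp add: BD_mmul BD_ctrans)
    show "DB b n (ctrans cj L2)"
      using L2 zero by (simp add: DB_ctrans)
    show "M = mmul n L1 (mmul n (mmul n R1 (ctrans cj R2)) (ctrans cj L2))"
      using M by (simp add: ctrans_mmul[OF zero add mult] mmul_assoc)
  qed
qed

lemma sigma_perm_bounds:
  assumes "0 < b" "b dvd n" "i < n"
  shows "sigma_perm b n i < n"
    and "sigma_perm b n i div (n div b) = i mod b"
    and "sigma_perm b n i mod (n div b) = i div b"
proof -
  define m where "m = n div b"
  have n: "n = b * m"
    using assms m_def by simp
  have "i div b < m"
    using assms n by (simp add: div_less_iff_less_mult mult.commute)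
  moreover have "(i mod b + 1) * m \<le> b * m"
    using assms by (intro mult_right_mono) (simp_all add: Suc_leI)
  ultimately show "sigma_perm b n i < n"
    and "sigma_perm b n i div (n div b) = i mod b"
    and "sigma_perm b n i mod (n div b) = i div b"
    using n unfolding sigma_perm_def m_def[symmetric] by simp_all
qed

definition sigma_perm_inv :: "nat \<Rightarrow> nat \<Rightarrow> nat \<Rightarrow> nat" where
  "sigma_perm_inv b n r = (r mod (n div b)) * b + r div (n div b)"

lemma sigma_perm_inv_bounds:
  assumes "0 < b" "b dvd n" "r < n"
  shows "sigma_perm_inv b n r < n"
    and "sigma_perm_inv b n r mod b = r div (n div b)"
proof -
  define m where "m = n div b"
  have n: "n = b * m"
    using assms m_def by simp
  then have "0 < m"
    using assms by (cases "m = 0") auto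
  then have "r div m < b"
    using assms n by (simp add: div_less_iff_less_mult)
  moreover have "(r mod m + 1) * b \<le> m * b"
    using \<open>0 < m\<close> by (intro mult_right_mono) (simp_all add: Suc_leI)
  ultimately show "sigma_perm_inv b n r < n"
    and "sigma_perm_inv b n r mod b = r div (n div b)"
    using n unfolding sigma_perm_inv_def m_def[symmetric] by (simp_all add: mult.commute)
qed

lemma sigma_perm_inv_sigma_perm:
  assumes "0 < b" "b dvd n" "i < n"
  shows "sigma_perm_inv b n (sigma_perm b n i) = i"
  using sigma_perm_bounds[OF assms] unfolding sigma_perm_inv_def by simp

lemma transp_Pmat_mmul:
  fixes A :: "'a::comm_semiring_1 mat"
  assumes "0 < b" "b dvd n" "i < n" "j < n"
  shows "mmul n (transp_mat (Pmat b n)) A i j = A (sigma_perm b n i) j"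
  using assms sigma_perm_bounds(1)[OF assms(1-3)]
  by (simp add: mmul_def transp_mat_def Pmat_def if_distrib[of "\<lambda>x. x * _"] sum.delta
      cong: if_cong)

lemma mmul_Pmat:
  fixes A :: "'a::comm_semiring_1 mat"
  assumes "0 < b" "b dvd n" "i < n" "j < n"
  shows "mmul n A (Pmat b n) i j = A i (sigma_perm b n j)"
  using assms sigma_perm_bounds(1)[OF assms(1,2,4)]
  by (simp add: mmul_def Pmat_def if_distrib[of "\<lambda>x. _ * x"] sum.delta cong: if_cong)

lemma Pmat_conj_apply:
  fixes L :: "'a::comm_semiring_1 mat"
  assumes "0 < b" "b dvd n" "i < n" "j < n"
  shows "mmul n (mmul n (transp_mat (Pmat b n)) L) (Pmat b n) i j
    = L (sigma_perm b n i) (sigma_perm b n j)"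
  using assms sigma_perm_bounds(1)[OF assms(1,2,4)]
  by (simp add: mmul_Pmat transp_Pmat_mmul)

lemma DB_eq_Pmat_conj_BD:
  fixes X :: "'a::comm_semiring_1 mat"
  assumes b: "0 < b" "b dvd n" and X: "DB b n X"
  obtains L where "BD (n div b) n L"
    and "X = mmul n (mmul n (transp_mat (Pmat b n)) L) (Pmat b n)"
proof
  define L where "L r s = (if r < n \<and> s < n then X (sigma_perm_inv b n r) (sigma_perm_inv b n s)
    else 0)" for r s
  show "BD (n div b) n L"
    using X sigma_perm_inv_bounds[OF b] unfolding BD_def DB_def is_mat_def L_def by auto
  show "X = mmul n (mmul n (transp_mat (Pmat b n)) L) (Pmat b n)"
  proof (intro ext)
    fix i j
    show "X i j = mmul n (mmul n (transp_mat (Pmat b n)) L) (Pmat b n) i j"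
    proof (cases "i < n \<and> j < n")
      case True
      then show ?thesis
        using sigma_perm_bounds(1)[OF b] sigma_perm_inv_sigma_perm[OF b]
        by (simp add: Pmat_conj_apply[OF b] L_def)
    next
      case False
      then show ?thesis
        using X unfolding DB_def is_mat_def mmul_def by auto
    qed
  qed
qed

lemma MMstar_Pmat_factorization:
  fixes M :: "'a::comm_semiring_1 mat"
  assumes zero: "cj 0 = 0" and add: "\<And>x y. cj (x + y) = cj x + cj y"
    and mult: "\<And>x y. cj (x * y) = cj x * cj y"
    and b: "0 < b" "b dvd n" and "MMstar cj b n M"
  shows "\<exists>L1 L2 R. BD (n div b) n L1 \<and> BD (n div b) n L2 \<and> BD b n R \<and>
    M = mmul n (mmul n (mmul n (transp_mat (Pmat b n)) L1) (Pmat b n))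
      (mmul n R (mmul n (mmul n (transp_mat (Pmat b n)) L2) (Pmat b n)))"
proof -
  obtain L R L' where "DB b n L" "BD b n R" "DB b n L'" and M: "M = mmul n L (mmul n R L')"
    using MMstar_DB_BD_DB[OF zero add mult \<open>MMstar cj b n M\<close>] .
  moreover obtain L1 where "BD (n div b) n L1"
    and "L = mmul n (mmul n (transp_mat (Pmat b n)) L1) (Pmat b n)"
    using DB_eq_Pmat_conj_BD[OF b \<open>DB b n L\<close>] .
  moreover obtain L2 where "BD (n div b) n L2"
    and "L' = mmul n (mmul n (transp_mat (Pmat b n)) L2) (Pmat b n)"
    using DB_eq_Pmat_conj_BD[OF b \<open>DB b n L'\<close>] .
  ultimately show ?thesis
    by blast
qed

theorem propositionC11:
  fixes b n :: nat
  assumes "1 < b" and "b < n" and "b dvd n"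
  shows "(\<forall>M :: real mat. MMstar id b n M \<longrightarrow>
            (\<exists>L1 L2 R. BD (n div b) n L1 \<and> BD (n div b) n L2 \<and> BD b n R \<and>
               M = mmul n (mmul n (mmul n (transp_mat (Pmat b n)) L1) (Pmat b n))
                   (mmul n R (mmul n (mmul n (transp_mat (Pmat b n)) L2) (Pmat b n)))))
       \<and> (\<forall>M :: complex mat. MMstar cnj b n M \<longrightarrow>
            (\<exists>L1 L2 R. BD (n div b) n L1 \<and> BD (n div b) n L2 \<and> BD b n R \<and>
               M = mmul n (mmul n (mmul n (transp_mat (Pmat b n)) L1) (Pmat b n))
                   (mmul n R (mmul n (mmul n (transp_mat (Pmat b n)) L2) (Pmat b n)))))"
proof -
  have b: "0 < b" "b dvd n"
    using assms by simp_all
  show ?thesis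
    using MMstar_Pmat_factorization[of id, OF _ _ _ b] MMstar_Pmat_factorization[of cnj, OF _ _ _ b]
    by auto
qed

end
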